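(* Let $F\in\mathbb{R}^{p\times n}$ be arbitrary, let $s\ge1$ and $k$ be integers, and let $(u,x,y)$ be a solution of the system over the time interval $[k+1,k+s]$ (with arbitrary state $x(k+1)$). Then there exists $v\in\mathbb{R}^{(s+n)p}$ such that $$\begin{bmatrix}u_s(k)\\ y_s(k)\end{bmatrix}=I_{G,s}(F)\,v .$$ Moreover, if $s\ge n$, then $\operatorname{rank} I_{G,s}(F)=sp+n$.
   Context: Consider the discrete-time LTI system $x(k+1)=Ax(k)+Bu(k)$, $y(k)=Cx(k)+Du(k)$ with $u\in\mathbb{R}^p$, $x\in\mathbb{R}^n$, $y\in\mathbb{R}^m$, $n\ge 1$, and $(A,B,C,D)$ a minimal (controllable and observable) realization. For a sequence $\phi$ and integers $k$, $s\ge1$, the stacked vector is $\phi_s(k)=[\phi(k+1)^T,\dots,\phi(k+s)^T]^T$. For $F\in\mathbb{R}^{p\times n}$ put $A_F=A+BF$ and $C_F=C+DF$. For an integer $s\ge1$ and a gain $F$, the finite-sample image representation consists of the matrices $M_s(F)\in\mathbb{R}^{sp\times(s+n)p}$ and $N_s(F)\in\mathbb{R}^{sm\times(s+n)p}$ whose $(l,j)$ blocks ($l=1,\dots,s$; $j=1,\dots,s+n$) are $M_{n+l-j}$ and $N_{n+l-j}$, respectively, where $M_k=FA_F^{k-1}B$ for $k\ge1$, $M_0=I_p$, $M_k=0$ for $k<0$, and $N_k=C_FA_F^{k-1}B$ for $k\ge1$, $N_0=D$, $N_k=0$ for $k<0$. Write $I_{G,s}(F)=\begin{bmatrix}M_s(F)\\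 N_s(F)\end{bmatrix}$. *)

theory Defs
  imports "Jordan_Normal_Form.DL_Rank"
begin

abbreviation mrank :: "real mat \<Rightarrow> nat" where
  "mrank M \<equiv> vec_space.rank (dim_row M) M"

text \<open>Kalman controllability matrix [B, AB, ..., A^(n-1) B] (n x np).\<close>
definition ctrb_mat :: "nat \<Rightarrow> nat \<Rightarrow> real mat \<Rightarrow> real mat \<Rightarrow> real mat" where
  "ctrb_mat n p A B = mat n (n * p) (\<lambda>(i, j). ((A ^\<^sub>m (j div p)) * B) $$ (i, j mod p))"

text \<open>Kalman observability matrix [C; CA; ...; CA^(n-1)] (nm x n).\<close>
definition obsv_mat :: "nat \<Rightarrow> nat \<Rightarrow> real mat \<Rightarrow> real mat \<Rightarrow> real mat" where
  "obsv_mat n m A C = mat (n * m) n (\<lambda>(i, j). (C * (A ^\<^sub>m (i div m))) $$ (i mod m, j))"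

definition controllable :: "nat \<Rightarrow> nat \<Rightarrow> real mat \<Rightarrow> real mat \<Rightarrow> bool" where
  "controllable n p A B \<longleftrightarrow> mrank (ctrb_mat n p A B) = n"

definition observable :: "nat \<Rightarrow> nat \<Rightarrow> real mat \<Rightarrow> real mat \<Rightarrow> bool" where
  "observable n m A C \<longleftrightarrow> mrank (obsv_mat n m A C) = n"

definition Mblk :: "nat \<Rightarrow> real mat \<Rightarrow> real mat \<Rightarrow> real mat \<Rightarrow> int \<Rightarrow> real mat" where
  "Mblk p A B F k =
     (if k < 0 then 0\<^sub>m p p
      else if k = 0 then 1\<^sub>m p
      else F * ((A + B * F) ^\<^sub>m (nat k - 1)) * B)"

definition Nblk :: "nat \<Rightarrow> nat \<Rightarrow> real mat \<Rightarrow> real mat \<Rightarrow> real mat \<Rightarrow> real mat \<Rightarrow> real mat \<Rightarrow> int \<Rightarrow> real mat" where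
  "Nblk m p A B C D F k =
     (if k < 0 then 0\<^sub>m m p
      else if k = 0 then D
      else (C + D * F) * ((A + B * F) ^\<^sub>m (nat k - 1)) * B)"

text \<open>M_s(F): sp x (s+n)p, block (l,j) (1-based) equals M_{n+l-j}.  With 0-based
  block indices l' = i div p, j' = j div p, n + l - j = n + l' - j'.\<close>
definition Ms :: "nat \<Rightarrow> nat \<Rightarrow> nat \<Rightarrow> real mat \<Rightarrow> real mat \<Rightarrow> real mat \<Rightarrow> real mat" where
  "Ms s n p A B F = mat (s * p) ((s + n) * p)
     (\<lambda>(i, j). Mblk p A B F (int n + int (i div p) - int (j div p)) $$ (i mod p, j mod p))"

definition Ns :: "nat \<Rightarrow> nat \<Rightarrow> nat \<Rightarrow> nat \<Rightarrow> real mat \<Rightarrow> real mat \<Rightarrow> real mat \<Rightarrow> real mat \<Rightarrow> real mat \<Rightarrow> real mat" where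
  "Ns s n m p A B C D F = mat (s * m) ((s + n) * p)
     (\<lambda>(i, j). Nblk m p A B C D F (int n + int (i div m) - int (j div p)) $$ (i mod m, j mod p))"

definition IGs :: "nat \<Rightarrow> nat \<Rightarrow> nat \<Rightarrow> nat \<Rightarrow> real mat \<Rightarrow> real mat \<Rightarrow> real mat \<Rightarrow> real mat \<Rightarrow> real mat \<Rightarrow> real mat" where
  "IGs s n m p A B C D F = Ms s n p A B F @\<^sub>r Ns s n m p A B C D F"

definition stack :: "nat \<Rightarrow> nat \<Rightarrow> (int \<Rightarrow> real vec) \<Rightarrow> int \<Rightarrow> real vec" where
  "stack s q \<phi> k = vec (s * q) (\<lambda>i. \<phi> (k + 1 + int (i div q)) $ (i mod q))"

end

theory Submission
  imports Defs
begin

text \<open>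
  Read a vector v as the input w of the closed-loop system x(t+1) = (A + B F) x(t) + B w(t)
  started at rest. Convolving with the Markov blocks shows that M_s(F) v and N_s(F) v are the
  inputs u = F x + w and outputs y = C x + D u at times n, ..., n+s-1, and under u = F x + w
  the closed-loop trajectory is an ordinary trajectory of (A, B). Since every state is reachable
  from rest in n steps, the column space of I_G,s(F) is exactly the set of all input-output
  windows of length s, which gives the first claim. That set is also the image of the matrix
  [[I, 0], [T, O_s]] acting on (u, x0), with T the Toeplitz matrix of the Markov parameters
  and O_s the extended observability matrix; for s \<ge> n observability makes this matrix
  injective, so the rank is s p + n.
\<close>

section \<open>Column space and rank\<close>

lemma mult_unit_vec_eq_col:
  fixes M :: "'a::semiring_1 mat"
  assumes M: "M \<in> carrier_mat nr nc" and i: "i < nc"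
  shows "M *\<^sub>v unit_vec nc i = col M i"
proof (rule eq_vecI)
  fix r assume "r < dim_vec (col M i)"
  then show "(M *\<^sub>v unit_vec nc i) $ r = col M i $ r"
    using M i scalar_prod_right_unit[OF i, of "row M r"] by simp
qed (use M in simp)

lemma zero_mat_mult_vec:
  fixes v :: "'a::semiring_0 vec"
  assumes "v \<in> carrier_vec nc"
  shows "0\<^sub>m nr nc *\<^sub>v v = 0\<^sub>v nr"
  by (rule eq_vecI) (use assms in \<open>auto simp: scalar_prod_def\<close>)

lemma mult_mat_zero_vec:
  fixes M :: "'a::semiring_0 mat"
  assumes "M \<in> carrier_mat nr nc"
  shows "M *\<^sub>v 0\<^sub>v nc = 0\<^sub>v nr"
  by (rule eq_vecI) (use assms in auto)

context vec_space
begin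

lemma col_space_eq_image:
  assumes M: "M \<in> carrier_mat n nc"
  shows "col_space M = {M *\<^sub>v v | v. v \<in> carrier_vec nc}"
  unfolding col_space_eq[OF M] using M by auto

lemma rank_eq_if_image_eq:
  assumes M: "M \<in> carrier_mat n nc" and P: "P \<in> carrier_mat n r"
    and "{M *\<^sub>v v | v. v \<in> carrier_vec nc} = {P *\<^sub>v v | v. v \<in> carrier_vec r}"
  shows "rank M = rank P"
  using assms col_space_eq_image[OF M] col_space_eq_image[OF P]
  unfolding rank_def col_space_def by simp

lemma maximal_lin_indpt_cols_exists:
  "\<exists>S. maximal S (\<lambda>T. T \<subseteq> set (cols M) \<and> lin_indpt T)"
  using maximal_exists[of "\<lambda>T. T \<subseteq> set (cols M) \<and> lin_indpt T" "card (set (cols M))" "{}"]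
  by (meson List.finite_set card_mono empty_iff empty_subsetI finite_lin_indpt2 rev_finite_subset)

lemma rank_le_card_set_cols:
  assumes M: "M \<in> carrier_mat n nc"
  shows "rank M \<le> card (set (cols M))"
proof -
  obtain S where S: "maximal S (\<lambda>T. T \<subseteq> set (cols M) \<and> lin_indpt T)"
    using maximal_lin_indpt_cols_exists by blast
  then have "card S \<le> card (set (cols M))"
    by (simp add: card_mono maximal_def)
  then show ?thesis
    using rank_card_indpt[OF M S] by simp
qed

lemma rank_eq_dim_col_if_inj:
  assumes M: "M \<in> carrier_mat n nc"
    and inj: "\<And>v. v \<in> carrier_vec nc \<Longrightarrow> M *\<^sub>v v = 0\<^sub>v n \<Longrightarrow> v = 0\<^sub>v nc"
  shows "rank M = nc"
proof -
  have distinct: "distinct (cols M)"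
  proof (rule ccontr)
    assume "\<not> distinct (cols M)"
    then obtain i j where ij: "i < nc" "j < nc" "i \<noteq> j" "col M i = col M j"
      using M by (auto simp: distinct_conv_nth)
    let ?w = "unit_vec nc i - unit_vec nc j :: 'a vec"
    have "M *\<^sub>v ?w = col M i - col M j"
      using M ij by (simp add: mult_minus_distrib_mat_vec mult_unit_vec_eq_col)
    also have "\<dots> = 0\<^sub>v n"
      using M ij by simp
    finally have "?w = 0\<^sub>v nc"
      using inj[of ?w] by simp
    then have "?w $ i = 0"
      using ij by simp
    then show False
      using ij by simp
  qed
  have "lin_indpt (set (cols M))"
  proof
    assume "lin_dep (set (cols M))"
    then obtain v where "v \<in> carrier_vec nc" "v \<noteq> 0\<^sub>v nc" "M *\<^sub>v v = 0\<^sub>v n"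
      using lin_depE[OF M _ distinct] by blast
    then show False
      using inj by blast
  qed
  then show ?thesis
    using lin_indpt_full_rank[OF M distinct] by blast
qed

lemma inj_if_rank_eq_dim_col:
  assumes M: "M \<in> carrier_mat n nc" and rank: "rank M = nc"
    and v: "v \<in> carrier_vec nc" and Mv: "M *\<^sub>v v = 0\<^sub>v n"
  shows "v = 0\<^sub>v nc"
proof -
  have "card (set (cols M)) \<ge> length (cols M)"
    using rank_le_card_set_cols[OF M] rank M by simp
  then have distinct: "distinct (cols M)"
    using card_distinct card_length le_antisym by blast
  then have "lin_indpt (set (cols M))"
    using full_rank_lin_indpt[OF M rank] by blast
  then show ?thesis
    using lin_depI[OF M v _ Mv distinct] by blast
qed

lemma surj_if_rank_eq_dim_row:
  assumes M: "M \<in> carrier_mat n nc" and rank: "rank M = n" and x: "x \<in> carrier_vec n"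
  shows "\<exists>v \<in> carrier_vec nc. M *\<^sub>v v = x"
proof -
  obtain S where S: "maximal S (\<lambda>T. T \<subseteq> set (cols M) \<and> lin_indpt T)"
    using maximal_lin_indpt_cols_exists by blast
  have S_cols: "S \<subseteq> set (cols M)" and S_indpt: "lin_indpt S"
    using S unfolding maximal_def by auto
  have cols: "set (cols M) \<subseteq> carrier_vec n"
    using M cols_dim by blast
  have "card S = n"
    using rank_card_indpt[OF M S] rank by simp
  then have "basis S"
    by (intro dim_li_is_basis) (use S_cols S_indpt cols dim_is_n finite_subset in auto)
  then have "x \<in> col_space M"
    using span_is_monotone[OF S_cols] x unfolding basis_def col_space_def by blast
  then show ?thesis
    unfolding col_space_eq_image[OF M] by blast
qed

end

section \<open>Block vectors\<close>

definition vec_block :: "nat \<Rightarrow> 'a vec \<Rightarrow> nat \<Rightarrow> 'a vec" where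
  "vec_block p v j = vec p (\<lambda>i. v $ (j * p + i))"

definition stack_blocks :: "nat \<Rightarrow> nat \<Rightarrow> (nat \<Rightarrow> 'a vec) \<Rightarrow> 'a vec" where
  "stack_blocks s p f = vec (s * p) (\<lambda>i. f (i div p) $ (i mod p))"

definition sum_vec :: "nat \<Rightarrow> (nat \<Rightarrow> 'a::comm_monoid_add vec) \<Rightarrow> nat \<Rightarrow> 'a vec" where
  "sum_vec d f t = vec d (\<lambda>i. \<Sum>j<t. f j $ i)"

lemma dim_vec_block [simp]: "dim_vec (vec_block p v j) = p"
  unfolding vec_block_def by simp

lemma dim_stack_blocks [simp]: "dim_vec (stack_blocks s p f) = s * p"
  unfolding stack_blocks_def by simp

lemma dim_sum_vec [simp]: "dim_vec (sum_vec d f t) = d"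
  unfolding sum_vec_def by simp

lemma vec_block_carrier [simp]: "vec_block p v j \<in> carrier_vec p"
  by (rule carrier_vecI) simp

lemma stack_blocks_carrier [simp]: "stack_blocks s p f \<in> carrier_vec (s * p)"
  by (rule carrier_vecI) simp

lemma sum_vec_carrier [simp]: "sum_vec d f t \<in> carrier_vec d"
  by (rule carrier_vecI) simp

lemma block_index_less:
  fixes l s i p :: nat
  assumes "l < s" and "i < p"
  shows "l * p + i < s * p"
proof -
  have "l * p + i < Suc l * p"
    using assms by simp
  also have "\<dots> \<le> s * p"
    using assms by (intro mult_right_mono) auto
  finally show ?thesis .
qed

lemma index_stack_blocks:
  assumes "l < s" and "i < p"
  shows "stack_blocks s p f $ (l * p + i) = f l $ i"
  using assms block_index_less[OF assms] by (simp add: stack_blocks_def)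

lemma stack_blocks_eqI:
  assumes w: "w \<in> carrier_vec (s * p)"
    and blocks: "\<And>l i. l < s \<Longrightarrow> i < p \<Longrightarrow> w $ (l * p + i) = f l $ i"
  shows "w = stack_blocks s p f"
proof (rule eq_vecI)
  fix a assume "a < dim_vec (stack_blocks s p f)"
  then have a: "a < s * p"
    by simp
  then have "p > 0"
    by (cases p) auto
  then have "a div p < s" "a mod p < p"
    using a by (simp_all add: less_mult_imp_div_less)
  then show "w $ a = stack_blocks s p f $ a"
    using blocks[of "a div p" "a mod p"] a by (simp add: stack_blocks_def)
qed (use w in simp)

lemma stack_blocks_cong:
  assumes "\<And>l. l < s \<Longrightarrow> f l = g l"
  shows "stack_blocks s p f = stack_blocks s p g"
  by (rule stack_blocks_eqI) (simp_all add: index_stack_blocks assms)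

lemma vec_block_stack_blocks:
  assumes "j < s" and "f j \<in> carrier_vec p"
  shows "vec_block p (stack_blocks s p f) j = f j"
  by (rule eq_vecI) (use assms in \<open>simp_all add: vec_block_def index_stack_blocks\<close>)

lemma stack_blocks_vec_block:
  assumes "v \<in> carrier_vec (s * p)"
  shows "stack_blocks s p (vec_block p v) = v"
  by (rule stack_blocks_eqI[OF assms, symmetric]) (simp add: vec_block_def)

lemma stack_blocks_add:
  assumes "\<And>l. l < s \<Longrightarrow> f l \<in> carrier_vec p" and "\<And>l. l < s \<Longrightarrow> g l \<in> carrier_vec p"
  shows "stack_blocks s p f + stack_blocks s p g = stack_blocks s p (\<lambda>l. f l + g l)"
proof (rule stack_blocks_eqI)
  fix l i assume "l < s" "i < p"
  moreover have "g l \<in> carrier_vec p"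
    using assms(2) \<open>l < s\<close> .
  ultimately show "(stack_blocks s p f + stack_blocks s p g) $ (l * p + i) = (f l + g l) $ i"
    by (simp add: index_stack_blocks block_index_less)
qed simp

lemma stack_blocks_one:
  assumes "f 0 \<in> carrier_vec p"
  shows "stack_blocks 1 p f = f 0"
  by (rule eq_vecI) (use assms in \<open>simp_all add: stack_blocks_def\<close>)

lemma sum_vec_Suc:
  assumes "f t \<in> carrier_vec d"
  shows "sum_vec d f (Suc t) = sum_vec d f t + f t"
  by (rule eq_vecI) (use assms in \<open>simp_all add: sum_vec_def\<close>)

lemma sum_vec_cong:
  assumes "\<And>j. j < t \<Longrightarrow> f j = g j"
  shows "sum_vec d f t = sum_vec d g t"
  unfolding sum_vec_def using assms by simp

lemma sum_vec_zero_tail: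
  assumes "t \<le> t'" and "\<And>j. t \<le> j \<Longrightarrow> j < t' \<Longrightarrow> f j = 0\<^sub>v d"
  shows "sum_vec d f t' = sum_vec d f t"
proof -
  have "(\<Sum>j<t'. f j $ i) = (\<Sum>j<t. f j $ i)" if "i < d" for i
    using assms that by (intro sum.mono_neutral_right) auto
  then show ?thesis
    unfolding sum_vec_def by (intro eq_vecI) auto
qed

lemma sum_vec_reflect: "sum_vec d (\<lambda>j. f (t - 1 - j)) t = sum_vec d f t"
  unfolding sum_vec_def using sum.nat_diff_reindex[of "\<lambda>j. f j $ _" t] by simp

lemma mult_mat_vec_sum_vec:
  fixes M :: "'a::comm_semiring_0 mat"
  assumes M: "M \<in> carrier_mat r d" and f: "\<And>j. j < t \<Longrightarrow> f j \<in> carrier_vec d"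
  shows "M *\<^sub>v sum_vec d f t = sum_vec r (\<lambda>j. M *\<^sub>v f j) t"
proof (rule eq_vecI)
  fix i assume "i < dim_vec (sum_vec r (\<lambda>j. M *\<^sub>v f j) t)"
  then have i: "i < r"
    by simp
  have "(M *\<^sub>v sum_vec d f t) $ i = (\<Sum>c<d. M $$ (i, c) * (\<Sum>j<t. f j $ c))"
    using M i by (simp add: sum_vec_def scalar_prod_def lessThan_atLeast0)
  also have "\<dots> = (\<Sum>j<t. \<Sum>c<d. M $$ (i, c) * f j $ c)"
    unfolding sum_distrib_left by (rule sum.swap)
  also have "\<dots> = (\<Sum>j<t. (M *\<^sub>v f j) $ i)"
  proof (rule sum.cong[OF refl])
    fix j assume "j \<in> {..<t}"
    then have "f j \<in> carrier_vec d"
      by (simp add: f)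
    then show "(\<Sum>c<d. M $$ (i, c) * f j $ c) = (M *\<^sub>v f j) $ i"
      using M i by (simp add: scalar_prod_def lessThan_atLeast0)
  qed
  also have "\<dots> = sum_vec r (\<lambda>j. M *\<^sub>v f j) t $ i"
    using i by (simp add: sum_vec_def)
  finally show "(M *\<^sub>v sum_vec d f t) $ i = sum_vec r (\<lambda>j. M *\<^sub>v f j) t $ i" .
qed (use M in simp)

lemma sum_lessThan_mult_blocks:
  fixes g :: "nat \<Rightarrow> 'a::comm_monoid_add"
  shows "(\<Sum>c<N * p. g c) = (\<Sum>j<N. \<Sum>i<p. g (j * p + i))"
proof -
  have "sum g {j * p..<j * p + p} = (\<Sum>i<p. g (j * p + i))" for j
    using sum.shift_bounds_nat_ivl[of g 0 "j * p" p] by (simp add: lessThan_atLeast0 add.commute)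
  then show ?thesis
    using sum.nat_group[of g p N] by simp
qed

lemma mult_block_mat_vec:
  fixes G :: "nat \<Rightarrow> nat \<Rightarrow> 'a::comm_semiring_0 mat"
  assumes G: "\<And>l j. G l j \<in> carrier_mat r p" and v: "v \<in> carrier_vec (N * p)"
  shows "mat (s * r) (N * p) (\<lambda>(a, b). G (a div r) (b div p) $$ (a mod r, b mod p)) *\<^sub>v v
       = stack_blocks s r (\<lambda>l. sum_vec r (\<lambda>j. G l j *\<^sub>v vec_block p v j) N)"
    (is "?M *\<^sub>v v = _")
proof (rule stack_blocks_eqI)
  fix l i assume l: "l < s" and i: "i < r"
  have "(?M *\<^sub>v v) $ (l * r + i) = (\<Sum>c<N * p. G l (c div p) $$ (i, c mod p) * v $ c)"
    using block_index_less[OF l i] v i by (simp add: scalar_prod_def lessThan_atLeast0)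
  also have "\<dots> = (\<Sum>j<N. \<Sum>k<p. G l j $$ (i, k) * v $ (j * p + k))"
    unfolding sum_lessThan_mult_blocks by (intro sum.cong refl) simp
  also have "\<dots> = (\<Sum>j<N. (G l j *\<^sub>v vec_block p v j) $ i)"
  proof (rule sum.cong[OF refl])
    fix j
    have "G l j \<in> carrier_mat r p"
      by (rule G)
    then show "(\<Sum>k<p. G l j $$ (i, k) * v $ (j * p + k)) = (G l j *\<^sub>v vec_block p v j) $ i"
      using i by (simp add: vec_block_def scalar_prod_def lessThan_atLeast0)
  qed
  also have "\<dots> = sum_vec r (\<lambda>j. G l j *\<^sub>v vec_block p v j) N $ i"
    using i by (simp add: sum_vec_def)
  finally show "(?M *\<^sub>v v) $ (l * r + i) = sum_vec r (\<lambda>j. G l j *\<^sub>v vec_block p v j) N $ i" .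
qed (rule carrier_vecI, simp)

section \<open>Trajectories and state feedback\<close>

fun state :: "'a::semiring_0 mat \<Rightarrow> 'a mat \<Rightarrow> 'a vec \<Rightarrow> (nat \<Rightarrow> 'a vec) \<Rightarrow> nat \<Rightarrow> 'a vec" where
  "state A B x0 u 0 = x0"
| "state A B x0 u (Suc t) = A *\<^sub>v state A B x0 u t + B *\<^sub>v u t"

lemma state_carrier:
  assumes A: "A \<in> carrier_mat n n" and B: "B \<in> carrier_mat n p" and x0: "x0 \<in> carrier_vec n"
    and u: "\<And>j. j < t \<Longrightarrow> u j \<in> carrier_vec p"
  shows "state A B x0 u t \<in> carrier_vec n"
  using u by (induction t) (use A B x0 in auto)

lemma state_cong:
  assumes "\<And>j. j < t \<Longrightarrow> u j = u' j"
  shows "state A B x0 u t = state A B x0 u' t"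
  using assms by (induction t) auto

lemma state_shift: "state A B x0 u (t + l) = state A B (state A B x0 u t) (\<lambda>j. u (t + j)) l"
  by (induction l) auto

lemma pow_mat_Suc_left:
  fixes A :: "'a::semiring_1 mat"
  assumes A: "A \<in> carrier_mat n n"
  shows "A ^\<^sub>m Suc k = A * A ^\<^sub>m k"
proof (induction k)
  case (Suc k)
  have "A ^\<^sub>m Suc (Suc k) = (A * A ^\<^sub>m k) * A"
    using Suc by simp
  also have "\<dots> = A * A ^\<^sub>m Suc k"
    using A by (simp add: assoc_mult_mat[of _ n n _ n _ n])
  finally show ?case .
qed (use A in simp)

lemma state_from_zero_eq_sum_vec:
  fixes A B :: "'a::comm_semiring_1 mat"
  assumes A: "A \<in> carrier_mat n n" and B: "B \<in> carrier_mat n p"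
    and u: "\<And>j. j < t \<Longrightarrow> u j \<in> carrier_vec p"
  shows "state A B (0\<^sub>v n) u t = sum_vec n (\<lambda>j. A ^\<^sub>m (t - 1 - j) *\<^sub>v (B *\<^sub>v u j)) t"
  using u
proof (induction t)
  case 0
  show ?case
    by (rule eq_vecI) (simp_all add: sum_vec_def)
next
  case (Suc t)
  have u_t: "u t \<in> carrier_vec p" and u_less: "\<And>j. j < t \<Longrightarrow> u j \<in> carrier_vec p"
    using Suc.prems by simp_all
  have pow_step: "A *\<^sub>v (A ^\<^sub>m (t - 1 - j) *\<^sub>v (B *\<^sub>v u j)) = A ^\<^sub>m (Suc t - 1 - j) *\<^sub>v (B *\<^sub>v u j)"
    if "j < t" for j
  proof -
    have "A *\<^sub>v (A ^\<^sub>m (t - 1 - j) *\<^sub>v (B *\<^sub>v u j)) = A ^\<^sub>m Suc (t - 1 - j) *\<^sub>v (B *\<^sub>v u j)"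
      using A B u_less[OF that] pow_mat_Suc_left[OF A]
      by (simp add: assoc_mult_mat_vec[of _ n n _ n])
    also have "Suc (t - 1 - j) = Suc t - 1 - j"
      using that by simp
    finally show ?thesis .
  qed
  have "A *\<^sub>v state A B (0\<^sub>v n) u t = A *\<^sub>v sum_vec n (\<lambda>j. A ^\<^sub>m (t - 1 - j) *\<^sub>v (B *\<^sub>v u j)) t"
    using Suc.IH u_less by simp
  also have "\<dots> = sum_vec n (\<lambda>j. A *\<^sub>v (A ^\<^sub>m (t - 1 - j) *\<^sub>v (B *\<^sub>v u j))) t"
    by (intro mult_mat_vec_sum_vec[OF A] mult_mat_vec_carrier[OF pow_carrier_mat[OF A]]
        mult_mat_vec_carrier[OF B] u_less)
  also have "\<dots> = sum_vec n (\<lambda>j. A ^\<^sub>m (Suc t - 1 - j) *\<^sub>v (B *\<^sub>v u j)) t"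
    using pow_step by (rule sum_vec_cong)
  finally show ?case
    using A B u_t by (simp add: sum_vec_Suc)
qed

lemma state_eq_pow_plus_state_from_zero:
  fixes A B :: "'a::comm_semiring_1 mat"
  assumes A: "A \<in> carrier_mat n n" and B: "B \<in> carrier_mat n p" and x0: "x0 \<in> carrier_vec n"
    and u: "\<And>j. j < t \<Longrightarrow> u j \<in> carrier_vec p"
  shows "state A B x0 u t = A ^\<^sub>m t *\<^sub>v x0 + state A B (0\<^sub>v n) u t"
  using u
proof (induction t)
  case 0
  then show ?case
    using A x0 by simp
next
  case (Suc t)
  let ?z = "state A B (0\<^sub>v n) u t"
  have z: "?z \<in> carrier_vec n"
    using state_carrier[OF A B zero_carrier_vec] Suc.prems by simp
  have Ax0: "A ^\<^sub>m t *\<^sub>v x0 \<in> carrier_vec n"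
    using mult_mat_vec_carrier[OF pow_carrier_mat[OF A] x0] .
  have "state A B x0 u (Suc t) = A *\<^sub>v (A ^\<^sub>m t *\<^sub>v x0 + ?z) + B *\<^sub>v u t"
    using Suc by simp
  also have "\<dots> = A *\<^sub>v (A ^\<^sub>m t *\<^sub>v x0) + (A *\<^sub>v ?z + B *\<^sub>v u t)"
    using A B z Ax0 Suc.prems by (simp add: mult_add_distrib_mat_vec[OF A] assoc_add_vec[of _ n])
  also have "A *\<^sub>v (A ^\<^sub>m t *\<^sub>v x0) = A ^\<^sub>m Suc t *\<^sub>v x0"
    unfolding pow_mat_Suc_left[OF A] using A x0 by (simp add: assoc_mult_mat_vec[of _ n n _ n])
  finally show ?case
    by simp
qed

lemma add_diff_cancel_vec:
  fixes v w :: "'a::ab_group_add vec"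
  assumes "v \<in> carrier_vec n" and "w \<in> carrier_vec n"
  shows "v + (w - v) = w"
  by (rule eq_vecI) (use assms in auto)

lemma mult_add_feedback_mat_vec:
  fixes M N F :: "'a::comm_semiring_1 mat"
  assumes M: "M \<in> carrier_mat r n" and N: "N \<in> carrier_mat r p" and F: "F \<in> carrier_mat p n"
    and x: "x \<in> carrier_vec n" and w: "w \<in> carrier_vec p"
  shows "(M + N * F) *\<^sub>v x + N *\<^sub>v w = M *\<^sub>v x + N *\<^sub>v (F *\<^sub>v x + w)"
proof -
  have "(M + N * F) *\<^sub>v x = M *\<^sub>v x + N *\<^sub>v (F *\<^sub>v x)"
    using M N F x by (simp add: add_mult_distrib_mat_vec[of _ r n] assoc_mult_mat_vec[of _ r p _ n])
  moreover have "N *\<^sub>v (F *\<^sub>v x + w) = N *\<^sub>v (F *\<^sub>v x) + N *\<^sub>v w"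
    using N F x w by (simp add: mult_add_distrib_mat_vec[OF N])
  ultimately show ?thesis
    using M N F x w by (simp add: assoc_add_vec[of "M *\<^sub>v x" r])
qed

lemma state_closed_loop:
  fixes A B F :: "'a::comm_semiring_1 mat"
  assumes A: "A \<in> carrier_mat n n" and B: "B \<in> carrier_mat n p" and F: "F \<in> carrier_mat p n"
    and x0: "x0 \<in> carrier_vec n" and w: "\<And>j. j < t \<Longrightarrow> w j \<in> carrier_vec p"
  shows "state (A + B * F) B x0 w t = state A B x0 (\<lambda>j. F *\<^sub>v state (A + B * F) B x0 w j + w j) t"
  using w
proof (induction t)
  case (Suc t)
  have "state (A + B * F) B x0 w t \<in> carrier_vec n"
    using A B F x0 Suc.prems by (intro state_carrier[of _ n _ p]) auto
  then show ?case
    using Suc mult_add_feedback_mat_vec[OF A B F] by simp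
qed simp

lemma state_closed_loop_eq_open_loop:
  fixes A B F :: "'a::comm_ring_1 mat"
  assumes A: "A \<in> carrier_mat n n" and B: "B \<in> carrier_mat n p" and F: "F \<in> carrier_mat p n"
    and x0: "x0 \<in> carrier_vec n" and u: "\<And>j. j < t \<Longrightarrow> u j \<in> carrier_vec p"
    and w: "\<And>j. j < t \<Longrightarrow> w j = u j - F *\<^sub>v state A B x0 u j"
  shows "state (A + B * F) B x0 w t = state A B x0 u t"
  using u w
proof (induction t)
  case (Suc t)
  let ?x = "state A B x0 u t"
  have x: "?x \<in> carrier_vec n"
    using A B x0 Suc.prems by (intro state_carrier[of _ n _ p]) auto
  have "F *\<^sub>v ?x + (u t - F *\<^sub>v ?x) = u t"
    using F x Suc.prems(1)[of t] by (intro add_diff_cancel_vec[of _ p]) auto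
  then show ?case
    using Suc mult_add_feedback_mat_vec[OF A B F x, of "u t - F *\<^sub>v ?x"] F x by simp
qed simp

section \<open>The column space of the image representation\<close>

lemma Mblk_of_nat_diff:
  "Mblk p A B F (int t - int j) =
     (if j < t then F * (A + B * F) ^\<^sub>m (t - 1 - j) * B else if j = t then 1\<^sub>m p else 0\<^sub>m p p)"
  unfolding Mblk_def by (simp add: nat_diff_distrib)

lemma Nblk_of_nat_diff:
  "Nblk m p A B C D F (int t - int j) =
     (if j < t then (C + D * F) * (A + B * F) ^\<^sub>m (t - 1 - j) * B else if j = t then D else 0\<^sub>m m p)"
  unfolding Nblk_def by (simp add: nat_diff_distrib)

lemma Mblk_carrier:
  assumes A: "A \<in> carrier_mat n n" and B: "B \<in> carrier_mat n p" and F: "F \<in> carrier_mat p n"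
  shows "Mblk p A B F k \<in> carrier_mat p p"
  unfolding Mblk_def using A B F by (simp add: mult_carrier_mat[of _ p n])

lemma Nblk_carrier:
  assumes A: "A \<in> carrier_mat n n" and B: "B \<in> carrier_mat n p" and F: "F \<in> carrier_mat p n"
    and C: "C \<in> carrier_mat m n" and D: "D \<in> carrier_mat m p"
  shows "Nblk m p A B C D F k \<in> carrier_mat m p"
  unfolding Nblk_def using A B C D F by (simp add: mult_carrier_mat[of _ m n])

lemma sum_vec_impulse_response:
  fixes H E Af B :: "'a::comm_semiring_1 mat"
  assumes H: "H \<in> carrier_mat r n" and E: "E \<in> carrier_mat r p"
    and Af: "Af \<in> carrier_mat n n" and B: "B \<in> carrier_mat n p"
    and w: "\<And>j. w j \<in> carrier_vec p" and t: "t < N"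
  shows "sum_vec r (\<lambda>j. (if j < t then H * Af ^\<^sub>m (t - 1 - j) * B
                            else if j = t then E else 0\<^sub>m r p) *\<^sub>v w j) N
       = H *\<^sub>v state Af B (0\<^sub>v n) w t + E *\<^sub>v w t"
    (is "sum_vec r (\<lambda>j. ?G j *\<^sub>v w j) N = _")
proof -
  have "sum_vec r (\<lambda>j. ?G j *\<^sub>v w j) N = sum_vec r (\<lambda>j. ?G j *\<^sub>v w j) (Suc t)"
    using t w by (intro sum_vec_zero_tail) auto
  also have "\<dots> = sum_vec r (\<lambda>j. H *\<^sub>v (Af ^\<^sub>m (t - 1 - j) *\<^sub>v (B *\<^sub>v w j))) t + E *\<^sub>v w t"
  proof -
    have "?G j *\<^sub>v w j = H *\<^sub>v (Af ^\<^sub>m (t - 1 - j) *\<^sub>v (B *\<^sub>v w j))" if "j < t" for j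
      using that H Af B w[of j]
      by (simp add: assoc_mult_mat_vec[of _ r n _ p] assoc_mult_mat_vec[of _ r n _ n]
          assoc_mult_mat_vec[of _ n n _ p])
    then show ?thesis
      using E w by (simp add: sum_vec_Suc cong: sum_vec_cong)
  qed
  also have "sum_vec r (\<lambda>j. H *\<^sub>v (Af ^\<^sub>m (t - 1 - j) *\<^sub>v (B *\<^sub>v w j))) t
      = H *\<^sub>v state Af B (0\<^sub>v n) w t"
    unfolding state_from_zero_eq_sum_vec[OF Af B w]
    by (intro mult_mat_vec_sum_vec[OF H, symmetric] mult_mat_vec_carrier[OF pow_carrier_mat[OF Af]]
        mult_mat_vec_carrier[OF B] w)
  finally show ?thesis .
qed

lemma Ms_mult_vec:
  assumes A: "A \<in> carrier_mat n n" and B: "B \<in> carrier_mat n p" and F: "F \<in> carrier_mat p n"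
    and v: "v \<in> carrier_vec ((s + q) * p)"
  shows "Ms s q p A B F *\<^sub>v v = stack_blocks s p (\<lambda>l.
           F *\<^sub>v state (A + B * F) B (0\<^sub>v n) (vec_block p v) (q + l) + vec_block p v (q + l))"
proof -
  have "Ms s q p A B F *\<^sub>v v = stack_blocks s p (\<lambda>l.
          sum_vec p (\<lambda>j. Mblk p A B F (int q + int l - int j) *\<^sub>v vec_block p v j) (s + q))"
    unfolding Ms_def by (rule mult_block_mat_vec[OF Mblk_carrier[OF A B F] v])
  also have "\<dots> = stack_blocks s p (\<lambda>l.
          F *\<^sub>v state (A + B * F) B (0\<^sub>v n) (vec_block p v) (q + l) + vec_block p v (q + l))"
  proof (rule stack_blocks_cong)
    fix l assume "l < s"
    then show "sum_vec p (\<lambda>j. Mblk p A B F (int q + int l - int j) *\<^sub>v vec_block p v j) (s + q)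
        = F *\<^sub>v state (A + B * F) B (0\<^sub>v n) (vec_block p v) (q + l) + vec_block p v (q + l)"
      using sum_vec_impulse_response[OF F one_carrier_mat _ B vec_block_carrier, of "A + B * F" "q + l" "s + q"]
        Mblk_of_nat_diff[of p A B F "q + l"] A B F by simp
  qed
  finally show ?thesis .
qed

lemma Ns_mult_vec:
  assumes A: "A \<in> carrier_mat n n" and B: "B \<in> carrier_mat n p" and F: "F \<in> carrier_mat p n"
    and C: "C \<in> carrier_mat m n" and D: "D \<in> carrier_mat m p"
    and v: "v \<in> carrier_vec ((s + q) * p)"
  shows "Ns s q m p A B C D F *\<^sub>v v = stack_blocks s m (\<lambda>l.
           (C + D * F) *\<^sub>v state (A + B * F) B (0\<^sub>v n) (vec_block p v) (q + l) + D *\<^sub>v vec_block p v (q + l))"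
proof -
  have "Ns s q m p A B C D F *\<^sub>v v = stack_blocks s m (\<lambda>l.
          sum_vec m (\<lambda>j. Nblk m p A B C D F (int q + int l - int j) *\<^sub>v vec_block p v j) (s + q))"
    unfolding Ns_def by (rule mult_block_mat_vec[OF Nblk_carrier[OF A B F C D] v])
  also have "\<dots> = stack_blocks s m (\<lambda>l.
          (C + D * F) *\<^sub>v state (A + B * F) B (0\<^sub>v n) (vec_block p v) (q + l) + D *\<^sub>v vec_block p v (q + l))"
  proof (rule stack_blocks_cong)
    fix l assume "l < s"
    moreover have "C + D * F \<in> carrier_mat m n"
      using C D F by simp
    ultimately show "sum_vec m (\<lambda>j. Nblk m p A B C D F (int q + int l - int j) *\<^sub>v vec_block p v j) (s + q)
        = (C + D * F) *\<^sub>v state (A + B * F) B (0\<^sub>v n) (vec_block p v) (q + l) + D *\<^sub>v vec_block p v (q + l)"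
      using sum_vec_impulse_response[OF _ D _ B vec_block_carrier, of "C + D * F" "A + B * F" "q + l" "s + q"]
        Nblk_of_nat_diff[of m p A B C D F "q + l"] A B F by simp
  qed
  finally show ?thesis .
qed

definition io_stack ::
  "nat \<Rightarrow> nat \<Rightarrow> nat \<Rightarrow> 'a::semiring_0 mat \<Rightarrow> 'a mat \<Rightarrow> 'a mat \<Rightarrow> 'a mat \<Rightarrow> 'a vec \<Rightarrow> (nat \<Rightarrow> 'a vec) \<Rightarrow> 'a vec"
where
  "io_stack s m p A B C D x0 u =
     stack_blocks s p u @\<^sub>v stack_blocks s m (\<lambda>l. C *\<^sub>v state A B x0 u l + D *\<^sub>v u l)"

lemma io_stack_cong:
  assumes "\<And>l. l < s \<Longrightarrow> u l = u' l"
  shows "io_stack s m p A B C D x0 u = io_stack s m p A B C D x0 u'"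
proof -
  have "state A B x0 u l = state A B x0 u' l" if "l < s" for l
    using assms that by (intro state_cong) simp
  then show ?thesis
    unfolding io_stack_def using assms by (simp cong: stack_blocks_cong)
qed

lemma IGs_mult_vec:
  assumes A: "A \<in> carrier_mat n n" and B: "B \<in> carrier_mat n p" and F: "F \<in> carrier_mat p n"
    and C: "C \<in> carrier_mat m n" and D: "D \<in> carrier_mat m p"
    and v: "v \<in> carrier_vec ((s + q) * p)"
  defines "w \<equiv> vec_block p v"
  defines "x \<equiv> state (A + B * F) B (0\<^sub>v n) w"
  defines "u \<equiv> \<lambda>j. F *\<^sub>v x j + w j"
  shows "IGs s q m p A B C D F *\<^sub>v v = io_stack s m p A B C D (x q) (\<lambda>l. u (q + l))"
proof -
  have x_carrier: "x j \<in> carrier_vec n" for j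
    unfolding x_def w_def using A B F by (intro state_carrier[of _ n _ p]) auto
  have x_open_loop: "x = state A B (0\<^sub>v n) u"
  proof
    fix t
    show "x t = state A B (0\<^sub>v n) u t"
      unfolding x_def u_def w_def by (rule state_closed_loop[OF A B F zero_carrier_vec]) simp
  qed
  have "(C + D * F) *\<^sub>v x j + D *\<^sub>v w j = C *\<^sub>v x j + D *\<^sub>v u j" for j
    unfolding u_def w_def by (rule mult_add_feedback_mat_vec[OF C D F x_carrier vec_block_carrier])
  then have "Ns s q m p A B C D F *\<^sub>v v = stack_blocks s m (\<lambda>l. C *\<^sub>v x (q + l) + D *\<^sub>v u (q + l))"
    unfolding Ns_mult_vec[OF A B F C D v] w_def[symmetric] x_def[symmetric] by simp
  moreover have "Ms s q p A B F *\<^sub>v v = stack_blocks s p (\<lambda>l. u (q + l))"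
    unfolding Ms_mult_vec[OF A B F v] w_def[symmetric] x_def[symmetric] u_def ..
  moreover have "IGs s q m p A B C D F *\<^sub>v v = (Ms s q p A B F *\<^sub>v v) @\<^sub>v (Ns s q m p A B C D F *\<^sub>v v)"
    unfolding IGs_def Ms_def Ns_def by (rule mat_mult_append[OF mat_carrier mat_carrier v])
  moreover have "state A B (x q) (\<lambda>l. u (q + l)) l = x (q + l)" for l
    unfolding x_open_loop by (rule state_shift[symmetric])
  ultimately show ?thesis
    unfolding io_stack_def by simp
qed

lemma ctrb_mat_mult_vec:
  assumes A: "A \<in> carrier_mat n n" and B: "B \<in> carrier_mat n p" and z: "z \<in> carrier_vec (n * p)"
  shows "ctrb_mat n p A B *\<^sub>v z = sum_vec n (\<lambda>j. (A ^\<^sub>m j * B) *\<^sub>v vec_block p z j) n"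
proof -
  have ctrb: "ctrb_mat n p A B = mat (1 * n) (n * p) (\<lambda>(a, b). (A ^\<^sub>m (b div p) * B) $$ (a mod n, b mod p))"
    unfolding ctrb_mat_def by (rule eq_matI) auto
  have "A ^\<^sub>m j * B \<in> carrier_mat n p" for j
    using mult_carrier_mat[OF pow_carrier_mat[OF A] B] .
  then have "ctrb_mat n p A B *\<^sub>v z = stack_blocks 1 n (\<lambda>l. sum_vec n (\<lambda>j. (A ^\<^sub>m j * B) *\<^sub>v vec_block p z j) n)"
    unfolding ctrb by (rule mult_block_mat_vec[where G = "\<lambda>l j. A ^\<^sub>m j * B", OF _ z])
  also have "\<dots> = sum_vec n (\<lambda>j. (A ^\<^sub>m j * B) *\<^sub>v vec_block p z j) n"
    by (rule stack_blocks_one) simp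
  finally show ?thesis .
qed

lemma controllable_reach:
  assumes A: "A \<in> carrier_mat n n" and B: "B \<in> carrier_mat n p"
    and ctrb: "controllable n p A B" and x0: "x0 \<in> carrier_vec n"
  shows "\<exists>u. (\<forall>j. u j \<in> carrier_vec p) \<and> state A B (0\<^sub>v n) u n = x0"
proof -
  have M: "ctrb_mat n p A B \<in> carrier_mat n (n * p)"
    unfolding ctrb_mat_def by simp
  then obtain z where z: "z \<in> carrier_vec (n * p)" and zx: "ctrb_mat n p A B *\<^sub>v z = x0"
    using vec_space.surj_if_rank_eq_dim_row[OF M _ x0] ctrb unfolding controllable_def by auto
  define u where "u j = vec_block p z (n - 1 - j)" for j
  have "state A B (0\<^sub>v n) u n = sum_vec n (\<lambda>j. A ^\<^sub>m (n - 1 - j) *\<^sub>v (B *\<^sub>v u j)) n"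
    by (rule state_from_zero_eq_sum_vec[OF A B]) (simp add: u_def)
  also have "\<dots> = sum_vec n (\<lambda>j. (\<lambda>j. (A ^\<^sub>m j * B) *\<^sub>v vec_block p z j) (n - 1 - j)) n"
    using A B by (intro sum_vec_cong) (simp add: u_def assoc_mult_mat_vec[of _ n n _ p])
  also have "\<dots> = x0"
    using sum_vec_reflect[of n "\<lambda>j. (A ^\<^sub>m j * B) *\<^sub>v vec_block p z j" n]
      ctrb_mat_mult_vec[OF A B z] zx by simp
  finally show ?thesis
    by (intro exI[of _ u]) (simp add: u_def)
qed

lemma io_stack_in_image_IGs:
  assumes A: "A \<in> carrier_mat n n" and B: "B \<in> carrier_mat n p" and F: "F \<in> carrier_mat p n"
    and C: "C \<in> carrier_mat m n" and D: "D \<in> carrier_mat m p" and ctrb: "controllable n p A B"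
    and x0: "x0 \<in> carrier_vec n" and u: "\<And>l. l < s \<Longrightarrow> u l \<in> carrier_vec p"
  shows "\<exists>v \<in> carrier_vec ((s + n) * p). IGs s n m p A B C D F *\<^sub>v v = io_stack s m p A B C D x0 u"
proof -
  obtain u0 where u0: "\<And>j. u0 j \<in> carrier_vec p" and reach: "state A B (0\<^sub>v n) u0 n = x0"
    using controllable_reach[OF A B ctrb x0] by blast
  txt \<open>Steer from rest to x0 during the first n steps, then apply u; the blocks of v are the
    closed-loop inputs U - F x that produce this open-loop trajectory.\<close>
  define U where "U j = (if j < n then u0 j else if j < n + s then u (j - n) else 0\<^sub>v p)" for j
  have U: "U j \<in> carrier_vec p" for j
    unfolding U_def using u0 u by simp
  define x where "x = state A B (0\<^sub>v n) U"
  have x_n: "x n = x0"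
    unfolding x_def reach[symmetric] by (rule state_cong) (simp add: U_def)
  have x_carrier: "x j \<in> carrier_vec n" for j
    unfolding x_def using A B U by (intro state_carrier) auto
  define v where "v = stack_blocks (s + n) p (\<lambda>j. U j - F *\<^sub>v x j)"
  have v: "v \<in> carrier_vec ((s + n) * p)"
    unfolding v_def by simp
  have v_block: "vec_block p v j = U j - F *\<^sub>v x j" if "j < s + n" for j
    unfolding v_def using that F U x_carrier by (intro vec_block_stack_blocks) auto
  have closed_loop: "state (A + B * F) B (0\<^sub>v n) (vec_block p v) t = x t" if "t \<le> s + n" for t
    unfolding x_def
    by (rule state_closed_loop_eq_open_loop[OF A B F zero_carrier_vec U]) (use that v_block x_def in auto)
  let ?X = "state (A + B * F) B (0\<^sub>v n) (vec_block p v)"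
  have "IGs s n m p A B C D F *\<^sub>v v
      = io_stack s m p A B C D x0 (\<lambda>l. F *\<^sub>v ?X (n + l) + vec_block p v (n + l))"
    using IGs_mult_vec[OF A B F C D v] closed_loop[of n] x_n by simp
  also have "\<dots> = io_stack s m p A B C D x0 u"
  proof (rule io_stack_cong)
    fix l assume "l < s"
    then have "F *\<^sub>v ?X (n + l) + vec_block p v (n + l) = U (n + l)"
      using closed_loop[of "n + l"] v_block[of "n + l"] F x_carrier[of "n + l"] U[of "n + l"]
      by (simp add: add_diff_cancel_vec[of _ p])
    then show "F *\<^sub>v ?X (n + l) + vec_block p v (n + l) = u l"
      using \<open>l < s\<close> by (simp add: U_def)
  qed
  finally show ?thesis
    using v by blast
qed

lemma image_IGs:
  assumes A: "A \<in> carrier_mat n n" and B: "B \<in> carrier_mat n p" and F: "F \<in> carrier_mat p n"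
    and C: "C \<in> carrier_mat m n" and D: "D \<in> carrier_mat m p" and ctrb: "controllable n p A B"
  shows "{IGs s n m p A B C D F *\<^sub>v v | v. v \<in> carrier_vec ((s + n) * p)}
       = {io_stack s m p A B C D x0 u | x0 u. x0 \<in> carrier_vec n \<and> (\<forall>l < s. u l \<in> carrier_vec p)}"
proof (intro equalityI subsetI)
  fix y assume "y \<in> {IGs s n m p A B C D F *\<^sub>v v | v. v \<in> carrier_vec ((s + n) * p)}"
  then obtain v where v: "v \<in> carrier_vec ((s + n) * p)" and y: "y = IGs s n m p A B C D F *\<^sub>v v"
    by blast
  define x where "x = state (A + B * F) B (0\<^sub>v n) (vec_block p v)"
  have x_carrier: "x j \<in> carrier_vec n" for j
    unfolding x_def using A B F by (intro state_carrier[of _ n _ p]) auto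
  have "y = io_stack s m p A B C D (x n) (\<lambda>l. F *\<^sub>v x (n + l) + vec_block p v (n + l))"
    unfolding y x_def by (rule IGs_mult_vec[OF A B F C D v])
  moreover have "F *\<^sub>v x (n + l) + vec_block p v (n + l) \<in> carrier_vec p" for l
    using F x_carrier by simp
  ultimately show "y \<in> {io_stack s m p A B C D x0 u | x0 u. x0 \<in> carrier_vec n \<and> (\<forall>l < s. u l \<in> carrier_vec p)}"
    using x_carrier by blast
next
  fix y assume "y \<in> {io_stack s m p A B C D x0 u | x0 u. x0 \<in> carrier_vec n \<and> (\<forall>l < s. u l \<in> carrier_vec p)}"
  then obtain x0 u where "x0 \<in> carrier_vec n" "\<And>l. l < s \<Longrightarrow> u l \<in> carrier_vec p"
    and y: "y = io_stack s m p A B C D x0 u"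
    by blast
  then obtain v where "v \<in> carrier_vec ((s + n) * p)" "IGs s n m p A B C D F *\<^sub>v v = y"
    using io_stack_in_image_IGs[OF A B F C D ctrb] by blast
  then show "y \<in> {IGs s n m p A B C D F *\<^sub>v v | v. v \<in> carrier_vec ((s + n) * p)}"
    by blast
qed

lemma stack_eq_stack_blocks: "stack s q \<phi> k = stack_blocks s q (\<lambda>l. \<phi> (k + 1 + int l))"
  unfolding stack_def stack_blocks_def ..

lemma stack_trajectory_eq_io_stack:
  assumes state_eq: "\<And>j. k + 1 \<le> j \<Longrightarrow> j < k + int s \<Longrightarrow> x (j + 1) = A *\<^sub>v x j + B *\<^sub>v u j"
    and out_eq: "\<And>j. k + 1 \<le> j \<Longrightarrow> j \<le> k + int s \<Longrightarrow> y j = C *\<^sub>v x j + D *\<^sub>v u j"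
  shows "stack s p u k @\<^sub>v stack s m y k
       = io_stack s m p A B C D (x (k + 1)) (\<lambda>l. u (k + 1 + int l))"
proof -
  have x: "x (k + 1 + int l) = state A B (x (k + 1)) (\<lambda>l. u (k + 1 + int l)) l" if "l < s" for l
    using that
  proof (induction l)
    case (Suc l)
    have "x (k + 1 + int (Suc l)) = x (k + 1 + int l + 1)"
      by (simp add: algebra_simps)
    also have "\<dots> = A *\<^sub>v x (k + 1 + int l) + B *\<^sub>v u (k + 1 + int l)"
      using Suc.prems by (intro state_eq) auto
    finally show ?case
      using Suc by simp
  qed simp
  have "y (k + 1 + int l) = C *\<^sub>v state A B (x (k + 1)) (\<lambda>l. u (k + 1 + int l)) l + D *\<^sub>v u (k + 1 + int l)"
    if "l < s" for l
    using that x[OF that] out_eq[of "k + 1 + int l"] by simp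
  then show ?thesis
    unfolding io_stack_def stack_eq_stack_blocks by (simp cong: stack_blocks_cong)
qed

section \<open>Rank\<close>

definition ext_obsv_mat :: "nat \<Rightarrow> nat \<Rightarrow> nat \<Rightarrow> 'a::semiring_1 mat \<Rightarrow> 'a mat \<Rightarrow> 'a mat" where
  "ext_obsv_mat s n m A C = mat (s * m) n (\<lambda>(i, j). (C * A ^\<^sub>m (i div m)) $$ (i mod m, j))"

lemma ext_obsv_mat_carrier: "ext_obsv_mat s n m A C \<in> carrier_mat (s * m) n"
  unfolding ext_obsv_mat_def by simp

lemma obsv_mat_eq_ext_obsv_mat: "obsv_mat n m A C = ext_obsv_mat n n m A C"
  unfolding obsv_mat_def ext_obsv_mat_def ..

lemma ext_obsv_mat_mult_vec:
  fixes A C :: "'a::comm_semiring_1 mat"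
  assumes A: "A \<in> carrier_mat n n" and C: "C \<in> carrier_mat m n" and d: "d \<in> carrier_vec n"
  shows "ext_obsv_mat s n m A C *\<^sub>v d = stack_blocks s m (\<lambda>l. C *\<^sub>v (A ^\<^sub>m l *\<^sub>v d))"
proof (rule stack_blocks_eqI)
  fix l i assume l: "l < s" and i: "i < m"
  have "C * A ^\<^sub>m l \<in> carrier_mat m n"
    using A C by simp
  then have "dim_row (C * A ^\<^sub>m l) = m" "dim_col (C * A ^\<^sub>m l) = n"
    by auto
  then have "(ext_obsv_mat s n m A C *\<^sub>v d) $ (l * m + i) = ((C * A ^\<^sub>m l) *\<^sub>v d) $ i"
    using block_index_less[OF l i] i d by (simp add: ext_obsv_mat_def scalar_prod_def)
  also have "(C * A ^\<^sub>m l) *\<^sub>v d = C *\<^sub>v (A ^\<^sub>m l *\<^sub>v d)"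
    using A C d by (simp add: assoc_mult_mat_vec[of _ m n _ n])
  finally show "(ext_obsv_mat s n m A C *\<^sub>v d) $ (l * m + i) = (C *\<^sub>v (A ^\<^sub>m l *\<^sub>v d)) $ i" .
qed (rule mult_mat_vec_carrier[OF ext_obsv_mat_carrier d])

lemma ext_obsv_mat_mult_vec_eq_zero_mono:
  assumes k: "k \<le> s" and d: "d \<in> carrier_vec n"
    and zero: "ext_obsv_mat s n m A C *\<^sub>v d = 0\<^sub>v (s * m)"
  shows "ext_obsv_mat k n m A C *\<^sub>v d = 0\<^sub>v (k * m)"
proof (rule eq_vecI)
  fix i assume "i < dim_vec (0\<^sub>v (k * m) :: 'a vec)"
  then have i: "i < k * m" "i < s * m"
    using k by (auto intro: less_le_trans mult_le_mono1)
  then have "(ext_obsv_mat k n m A C *\<^sub>v d) $ i = (ext_obsv_mat s n m A C *\<^sub>v d) $ i"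
    by (simp add: ext_obsv_mat_def)
  then show "(ext_obsv_mat k n m A C *\<^sub>v d) $ i = 0\<^sub>v (k * m) $ i"
    using zero i by simp
qed (simp add: ext_obsv_mat_def)

text \<open>With offset 0 and gain 0, \<open>Ns\<close> is the block Toeplitz matrix of the Markov parameters
  D, CB, CAB, ... of the open-loop system.\<close>

definition io_mat :: "nat \<Rightarrow> nat \<Rightarrow> nat \<Rightarrow> nat \<Rightarrow> real mat \<Rightarrow> real mat \<Rightarrow> real mat \<Rightarrow> real mat \<Rightarrow> real mat" where
  "io_mat s n m p A B C D =
     four_block_mat (1\<^sub>m (s * p)) (0\<^sub>m (s * p) n) (Ns s 0 m p A B C D (0\<^sub>m p n)) (ext_obsv_mat s n m A C)"

lemma Ns_zero_gain_carrier: "Ns s 0 m p A B C D (0\<^sub>m p n) \<in> carrier_mat (s * m) (s * p)"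
  unfolding Ns_def by simp

lemma Ns_zero_gain_mult_vec:
  assumes A: "A \<in> carrier_mat n n" and B: "B \<in> carrier_mat n p"
    and C: "C \<in> carrier_mat m n" and D: "D \<in> carrier_mat m p" and a: "a \<in> carrier_vec (s * p)"
  shows "Ns s 0 m p A B C D (0\<^sub>m p n) *\<^sub>v a
       = stack_blocks s m (\<lambda>l. C *\<^sub>v state A B (0\<^sub>v n) (vec_block p a) l + D *\<^sub>v vec_block p a l)"
  using Ns_mult_vec[OF A B zero_carrier_mat C D, of a s 0] a A B C D by simp

lemma io_mat_carrier: "io_mat s n m p A B C D \<in> carrier_mat (s * p + s * m) (s * p + n)"
  unfolding io_mat_def
  by (intro four_block_carrier_mat one_carrier_mat zero_carrier_mat Ns_zero_gain_carrier ext_obsv_mat_carrier)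

lemma io_mat_mult_vec:
  assumes A: "A \<in> carrier_mat n n" and B: "B \<in> carrier_mat n p"
    and C: "C \<in> carrier_mat m n" and D: "D \<in> carrier_mat m p"
    and a: "a \<in> carrier_vec (s * p)" and d: "d \<in> carrier_vec n"
  shows "io_mat s n m p A B C D *\<^sub>v (a @\<^sub>v d) = io_stack s m p A B C D d (vec_block p a)"
proof -
  let ?w = "vec_block p a"
  let ?x = "state A B (0\<^sub>v n) ?w"
  have x: "?x l \<in> carrier_vec n" for l
    using A B by (intro state_carrier) auto
  have "io_mat s n m p A B C D *\<^sub>v (a @\<^sub>v d) = (1\<^sub>m (s * p) *\<^sub>v a + 0\<^sub>m (s * p) n *\<^sub>v d)
      @\<^sub>v (Ns s 0 m p A B C D (0\<^sub>m p n) *\<^sub>v a + ext_obsv_mat s n m A C *\<^sub>v d)"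
    unfolding io_mat_def
    by (rule four_block_mat_mult_vec[OF one_carrier_mat zero_carrier_mat Ns_zero_gain_carrier
          ext_obsv_mat_carrier a d])
  also have "1\<^sub>m (s * p) *\<^sub>v a + 0\<^sub>m (s * p) n *\<^sub>v d = stack_blocks s p ?w"
    using a d by (simp add: zero_mat_mult_vec stack_blocks_vec_block)
  also have "Ns s 0 m p A B C D (0\<^sub>m p n) *\<^sub>v a = stack_blocks s m (\<lambda>l. C *\<^sub>v ?x l + D *\<^sub>v ?w l)"
    by (rule Ns_zero_gain_mult_vec[OF A B C D a])
  also have "ext_obsv_mat s n m A C *\<^sub>v d = stack_blocks s m (\<lambda>l. C *\<^sub>v (A ^\<^sub>m l *\<^sub>v d))"
    by (rule ext_obsv_mat_mult_vec[OF A C d])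
  also have "stack_blocks s m (\<lambda>l. C *\<^sub>v ?x l + D *\<^sub>v ?w l) + \<dots>
      = stack_blocks s m (\<lambda>l. C *\<^sub>v state A B d ?w l + D *\<^sub>v ?w l)"
  proof -
    have Ad: "A ^\<^sub>m l *\<^sub>v d \<in> carrier_vec n" for l
      using mult_mat_vec_carrier[OF pow_carrier_mat[OF A] d] .
    have "C *\<^sub>v ?x l + D *\<^sub>v ?w l + C *\<^sub>v (A ^\<^sub>m l *\<^sub>v d) = C *\<^sub>v state A B d ?w l + D *\<^sub>v ?w l" for l
    proof -
      have "C *\<^sub>v state A B d ?w l = C *\<^sub>v (A ^\<^sub>m l *\<^sub>v d) + C *\<^sub>v ?x l"
        unfolding state_eq_pow_plus_state_from_zero[OF A B d vec_block_carrier]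
        by (rule mult_add_distrib_mat_vec[OF C Ad x])
      then show ?thesis
        using C D Ad[of l] x[of l] by (intro eq_vecI) auto
    qed
    moreover have "stack_blocks s m (\<lambda>l. C *\<^sub>v ?x l + D *\<^sub>v ?w l) + stack_blocks s m (\<lambda>l. C *\<^sub>v (A ^\<^sub>m l *\<^sub>v d))
        = stack_blocks s m (\<lambda>l. C *\<^sub>v ?x l + D *\<^sub>v ?w l + C *\<^sub>v (A ^\<^sub>m l *\<^sub>v d))"
      using C D x Ad by (intro stack_blocks_add) auto
    ultimately show ?thesis
      by simp
  qed
  finally show ?thesis
    unfolding io_stack_def .
qed

lemma image_io_mat:
  assumes A: "A \<in> carrier_mat n n" and B: "B \<in> carrier_mat n p"
    and C: "C \<in> carrier_mat m n" and D: "D \<in> carrier_mat m p"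
  shows "{io_mat s n m p A B C D *\<^sub>v z | z. z \<in> carrier_vec (s * p + n)}
       = {io_stack s m p A B C D x0 u | x0 u. x0 \<in> carrier_vec n \<and> (\<forall>l < s. u l \<in> carrier_vec p)}"
proof (intro equalityI subsetI)
  fix y assume "y \<in> {io_mat s n m p A B C D *\<^sub>v z | z. z \<in> carrier_vec (s * p + n)}"
  then obtain z where z: "z \<in> carrier_vec (s * p + n)" and y: "y = io_mat s n m p A B C D *\<^sub>v z"
    by blast
  define a where "a = vec_first z (s * p)"
  define d where "d = vec_last z n"
  have a: "a \<in> carrier_vec (s * p)" and d: "d \<in> carrier_vec n"
    unfolding a_def d_def by simp_all
  have "y = io_stack s m p A B C D d (vec_block p a)"
    using z unfolding y a_def d_def by (simp add: io_mat_mult_vec[OF A B C D, symmetric])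
  then show "y \<in> {io_stack s m p A B C D x0 u | x0 u. x0 \<in> carrier_vec n \<and> (\<forall>l < s. u l \<in> carrier_vec p)}"
    using d vec_block_carrier by blast
next
  fix y assume "y \<in> {io_stack s m p A B C D x0 u | x0 u. x0 \<in> carrier_vec n \<and> (\<forall>l < s. u l \<in> carrier_vec p)}"
  then obtain x0 u where x0: "x0 \<in> carrier_vec n" and u: "\<And>l. l < s \<Longrightarrow> u l \<in> carrier_vec p"
    and y: "y = io_stack s m p A B C D x0 u"
    by blast
  have "io_mat s n m p A B C D *\<^sub>v (stack_blocks s p u @\<^sub>v x0)
      = io_stack s m p A B C D x0 (vec_block p (stack_blocks s p u))"
    by (rule io_mat_mult_vec[OF A B C D stack_blocks_carrier x0])
  also have "\<dots> = y"
    unfolding y using u by (intro io_stack_cong vec_block_stack_blocks)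
  finally show "y \<in> {io_mat s n m p A B C D *\<^sub>v z | z. z \<in> carrier_vec (s * p + n)}"
    using x0 by (intro CollectI exI[of _ "stack_blocks s p u @\<^sub>v x0"]) simp
qed

lemma io_mat_inj:
  assumes obsv: "observable n m A C" and s: "n \<le> s"
    and z: "z \<in> carrier_vec (s * p + n)" and zero: "io_mat s n m p A B C D *\<^sub>v z = 0\<^sub>v (s * p + s * m)"
  shows "z = 0\<^sub>v (s * p + n)"
proof -
  let ?T = "Ns s 0 m p A B C D (0\<^sub>m p n)" and ?O = "ext_obsv_mat s n m A C"
  define a where "a = vec_first z (s * p)"
  define d where "d = vec_last z n"
  have a: "a \<in> carrier_vec (s * p)" and d: "d \<in> carrier_vec n" and z_split: "z = a @\<^sub>v d"
    using z unfolding a_def d_def by simp_all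
  have "a @\<^sub>v (?T *\<^sub>v a + ?O *\<^sub>v d) = 0\<^sub>v (s * p) @\<^sub>v 0\<^sub>v (s * m)"
    using zero four_block_mat_mult_vec[OF one_carrier_mat zero_carrier_mat Ns_zero_gain_carrier
        ext_obsv_mat_carrier a d] a d
    unfolding z_split io_mat_def by (auto simp: zero_mat_mult_vec)
  then have a0: "a = 0\<^sub>v (s * p)" and "?T *\<^sub>v a + ?O *\<^sub>v d = 0\<^sub>v (s * m)"
    using append_vec_eq[OF a zero_carrier_vec] by auto
  then have "?O *\<^sub>v d = 0\<^sub>v (s * m)"
    using mult_mat_zero_vec[OF Ns_zero_gain_carrier] ext_obsv_mat_carrier[of s n m A C] d by auto
  then have "obsv_mat n m A C *\<^sub>v d = 0\<^sub>v (n * m)"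
    unfolding obsv_mat_eq_ext_obsv_mat by (rule ext_obsv_mat_mult_vec_eq_zero_mono[OF s d])
  moreover have O: "obsv_mat n m A C \<in> carrier_mat (n * m) n"
    unfolding obsv_mat_eq_ext_obsv_mat by (rule ext_obsv_mat_carrier)
  moreover have "vec_space.rank (n * m) (obsv_mat n m A C) = n"
    using obsv O unfolding observable_def by simp
  ultimately have "d = 0\<^sub>v n"
    using vec_space.inj_if_rank_eq_dim_col[OF O _ d] by blast
  then show ?thesis
    unfolding z_split a0 by (intro eq_vecI) auto
qed

lemma rank_IGs:
  assumes A: "A \<in> carrier_mat n n" and B: "B \<in> carrier_mat n p" and F: "F \<in> carrier_mat p n"
    and C: "C \<in> carrier_mat m n" and D: "D \<in> carrier_mat m p"
    and ctrb: "controllable n p A B" and obsv: "observable n m A C" and s: "n \<le> s"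
  shows "mrank (IGs s n m p A B C D F) = s * p + n"
proof -
  have IG: "IGs s n m p A B C D F \<in> carrier_mat (s * p + s * m) ((s + n) * p)"
    unfolding IGs_def Ms_def Ns_def by (intro carrier_append_rows mat_carrier)
  have "vec_space.rank (s * p + s * m) (IGs s n m p A B C D F)
      = vec_space.rank (s * p + s * m) (io_mat s n m p A B C D)"
    using image_IGs[OF A B F C D ctrb] image_io_mat[OF A B C D]
    by (intro vec_space.rank_eq_if_image_eq[OF IG io_mat_carrier]) simp
  also have "\<dots> = s * p + n"
    using io_mat_inj[OF obsv s] by (intro vec_space.rank_eq_dim_col_if_inj[OF io_mat_carrier])
  finally show ?thesis
    using IG by simp
qed

theorem theorem1:
  fixes n m p s :: nat and k :: int
    and A B C D F :: "real mat"
    and u x y :: "int \<Rightarrow> real vec"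
  assumes n_pos: "n \<ge> 1"
    and A: "A \<in> carrier_mat n n" and B: "B \<in> carrier_mat n p"
    and C: "C \<in> carrier_mat m n" and D: "D \<in> carrier_mat m p"
    and ctrb: "controllable n p A B" and obsv: "observable n m A C"
    and F: "F \<in> carrier_mat p n"
    and s_pos: "s \<ge> 1"
    and u_dim: "\<And>j. k + 1 \<le> j \<Longrightarrow> j \<le> k + int s \<Longrightarrow> u j \<in> carrier_vec p"
    and x_dim: "\<And>j. k + 1 \<le> j \<Longrightarrow> j \<le> k + int s \<Longrightarrow> x j \<in> carrier_vec n"
    and y_dim: "\<And>j. k + 1 \<le> j \<Longrightarrow> j \<le> k + int s \<Longrightarrow> y j \<in> carrier_vec m"
    and state_eq: "\<And>j. k + 1 \<le> j \<Longrightarrow> j < k + int s \<Longrightarrow> x (j + 1) = A *\<^sub>v x j + B *\<^sub>v u j"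
    and out_eq: "\<And>j. k + 1 \<le> j \<Longrightarrow> j \<le> k + int s \<Longrightarrow> y j = C *\<^sub>v x j + D *\<^sub>v u j"
  shows "(\<exists>v \<in> carrier_vec ((s + n) * p).
            stack s p u k @\<^sub>v stack s m y k = IGs s n m p A B C D F *\<^sub>v v)
         \<and> (s \<ge> n \<longrightarrow> mrank (IGs s n m p A B C D F) = s * p + n)"
proof
  have x0: "x (k + 1) \<in> carrier_vec n"
    using x_dim s_pos by simp
  have u: "u (k + 1 + int l) \<in> carrier_vec p" if "l < s" for l
    using that by (intro u_dim) auto
  obtain v where v: "v \<in> carrier_vec ((s + n) * p)"
    and IG_v: "IGs s n m p A B C D F *\<^sub>v v = io_stack s m p A B C D (x (k + 1)) (\<lambda>l. u (k + 1 + int l))"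
    using io_stack_in_image_IGs[where u = "\<lambda>l. u (k + 1 + int l)" and s = s, OF A B F C D ctrb x0 u]
    by blast
  have "stack s p u k @\<^sub>v stack s m y k = io_stack s m p A B C D (x (k + 1)) (\<lambda>l. u (k + 1 + int l))"
    using state_eq out_eq by (rule stack_trajectory_eq_io_stack)
  then show "\<exists>v \<in> carrier_vec ((s + n) * p). stack s p u k @\<^sub>v stack s m y k = IGs s n m p A B C D F *\<^sub>v v"
    by (intro bexI[OF _ v]) (simp add: IG_v)
next
  show "s \<ge> n \<longrightarrow> mrank (IGs s n m p A B C D F) = s * p + n"
    using rank_IGs[OF A B F C D ctrb obsv] by blast
qed

end
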